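(* Let $\Delta$ be a simplicial complex on the vertex set $\{1,\ldots,n\}$, $V=\Bbbk^n$ over an algebraically closed field $\Bbbk$, and for each face $F\in\Delta$ let $X(F)\subseteq\mathbb PV$ be the coordinate projective subspace using only the coordinates in $F$. Let $X(\Delta)=\bigcup_{F\in\Delta}X(F)$ (the projective Stanley–Reisner scheme of $\Delta$), invariant under the torus $T=\mathbb G_m^n$ scaling the coordinates. Let $\Phi_S:\{1,\ldots,n\}\to\mathbb Z$ be strictly increasing and let $S:\mathbb G_m\to T$ act by $S(z)\cdot[x_1,\ldots,x_n]=[z^{\Phi_S(1)}x_1,\ldots,z^{\Phi_S(n)}x_n]$. Then, identifying the fixed point $[0,\ldots,0,1,0,\ldots,0]$ (with $1$ in position $i$) with $i$, the simplicial complex $\Delta(X(\Delta),S)$ of closure chains equals $\Delta$. In particular, every finite simplicial complex arises as a complex of closure chains.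
   Context: For a projective $T$-invariant scheme $X$ with $X^S=X^T$ finite and $f\in X^T$, the B-B stratum is $X_f=\{x\in X:\lim_{z\to0}S(z)\cdot x=f\}$. Define $\overline{X_\emptyset}=X$ and $\overline{X_{f_0,\ldots,f_k}}=\overline{\overline{X_{f_0,\ldots,f_{k-1}}}\cap X_{f_k}}$. A closure chain is a nonrepeating sequence $(f_0,\ldots,f_k)$ of points in $X^T$ with $\overline{X_{f_0,\ldots,f_k}}\neq\emptyset$; $\Delta(X,S)$ is the set of closure chains, regarded as subsets of $X^T$ (a simplicial complex). *)

theory Defs
  imports "HOL-Computational_Algebra.Polynomial"
begin

(* Vectors in k^n: functions nat => k, coordinates indexed by 1..n (zero outside). *)
type_synonym 'k vec = "nat \<Rightarrow> 'k"

definition supported :: "nat \<Rightarrow> 'k::zero vec \<Rightarrow> bool" where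
  "supported n x \<longleftrightarrow> (\<forall>i. i \<notin> {1..n} \<longrightarrow> x i = 0)"

definition scal :: "'k::times \<Rightarrow> 'k vec \<Rightarrow> 'k vec" where
  "scal c x = (\<lambda>i. c * x i)"

(* a point of projective space PV = the line (minus 0) through a nonzero vector *)
definition ppt :: "'k::field vec \<Rightarrow> 'k vec set" where
  "ppt x = {scal c x | c. c \<noteq> 0}"

definition proj_space :: "nat \<Rightarrow> 'k::field vec set set" where
  "proj_space n = {ppt x | x. (\<exists>i. x i \<noteq> 0) \<and> supported n x}"

inductive hpoly :: "nat \<Rightarrow> nat \<Rightarrow> ('k::field vec \<Rightarrow> 'k) \<Rightarrow> bool" for n where
  hconst: "hpoly n 0 (\<lambda>x. c)"
| hvar: "i \<in> {1..n} \<Longrightarrow> hpoly n 1 (\<lambda>x. x i)"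
| hadd: "hpoly n d f \<Longrightarrow> hpoly n d g \<Longrightarrow> hpoly n d (\<lambda>x. f x + g x)"
| hmult: "hpoly n d f \<Longrightarrow> hpoly n e g \<Longrightarrow> hpoly n (d + e) (\<lambda>x. f x * g x)"

(* polynomial functions on A^1 x k^n, homogeneous of degree d in x (arbitrary in z) *)
inductive zhpoly :: "nat \<Rightarrow> nat \<Rightarrow> ('k::field \<Rightarrow> 'k vec \<Rightarrow> 'k) \<Rightarrow> bool" for n where
  zconst: "zhpoly n 0 (\<lambda>z x. c)"
| zzvar: "zhpoly n 0 (\<lambda>z x. z)"
| zvar: "i \<in> {1..n} \<Longrightarrow> zhpoly n 1 (\<lambda>z x. x i)"
| zadd: "zhpoly n d f \<Longrightarrow> zhpoly n d g \<Longrightarrow> zhpoly n d (\<lambda>z x. f z x + g z x)"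
| zmult: "zhpoly n d f \<Longrightarrow> zhpoly n e g \<Longrightarrow> zhpoly n (d + e) (\<lambda>z x. f z x * g z x)"

definition zclosed :: "nat \<Rightarrow> 'k::field vec set set \<Rightarrow> bool" where
  "zclosed n A \<longleftrightarrow> (\<exists>F. (\<forall>f\<in>F. \<exists>d. hpoly n d f) \<and>
      A = {p \<in> proj_space n. \<forall>f\<in>F. \<forall>x\<in>p. f x = 0})"

definition zclosure :: "nat \<Rightarrow> 'k::field vec set set \<Rightarrow> 'k vec set set" where
  "zclosure n A = \<Inter>{C. zclosed n C \<and> A \<subseteq> C}"

definition zclosed2 :: "nat \<Rightarrow> ('k::field \<times> 'k vec set) set \<Rightarrow> bool" where
  "zclosed2 n A \<longleftrightarrow> (\<exists>F. (\<forall>f\<in>F. \<exists>d. zhpoly n d f) \<and>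
      A = {(z, p) | z p. p \<in> proj_space n \<and> (\<forall>f\<in>F. \<forall>x\<in>p. f z x = 0)})"

definition zclosure2 :: "nat \<Rightarrow> ('k::field \<times> 'k vec set) set \<Rightarrow> ('k \<times> 'k vec set) set" where
  "zclosure2 n A = \<Inter>{C. zclosed2 n C \<and> A \<subseteq> C}"

definition tact :: "'k::field vec \<Rightarrow> 'k vec set \<Rightarrow> 'k vec set" where
  "tact t p = (\<lambda>x i. t i * x i) ` p"

definition torus :: "nat \<Rightarrow> 'k::field vec set" where
  "torus n = {t. \<forall>i. t i \<noteq> 0}"

definition Sact :: "(nat \<Rightarrow> int) \<Rightarrow> 'k::field \<Rightarrow> 'k vec set \<Rightarrow> 'k vec set" where
  "Sact \<Phi> z p = tact (\<lambda>i. z powi \<Phi> i) p"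

(* lim_{z\<rightarrow>0} S(z).p = q : the orbit map z \<mapsto> S(z).p on G_m extends to A^1 with 0 \<mapsto> q,
   i.e. (0,q) lies in the closure of the graph {(z, S(z).p) | z \<noteq> 0} in A^1 x P^{n-1} *)
definition bb_lim :: "nat \<Rightarrow> (nat \<Rightarrow> int) \<Rightarrow> 'k::field vec set \<Rightarrow> 'k vec set \<Rightarrow> bool" where
  "bb_lim n \<Phi> p q \<longleftrightarrow> q \<in> proj_space n \<and>
     (0, q) \<in> zclosure2 n {(z, Sact \<Phi> z p) | z. z \<noteq> 0}"

definition fixedT :: "nat \<Rightarrow> 'k::field vec set set \<Rightarrow> 'k vec set set" where
  "fixedT n X = {p \<in> X. \<forall>t\<in>torus n. tact t p = p}"

definition bb_stratum :: "nat \<Rightarrow> (nat \<Rightarrow> int) \<Rightarrow> 'k::field vec set set \<Rightarrow> 'k vec set \<Rightarrow> 'k vec set set" where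
  "bb_stratum n \<Phi> X f = {x \<in> X. bb_lim n \<Phi> x f}"

definition chain_closure :: "nat \<Rightarrow> (nat \<Rightarrow> int) \<Rightarrow> 'k::field vec set set \<Rightarrow> 'k vec set list \<Rightarrow> 'k vec set set" where
  "chain_closure n \<Phi> X fs = foldl (\<lambda>C f. zclosure n (C \<inter> bb_stratum n \<Phi> X f)) X fs"

definition closure_chains :: "nat \<Rightarrow> (nat \<Rightarrow> int) \<Rightarrow> 'k::field vec set set \<Rightarrow> 'k vec set set set" where
  "closure_chains n \<Phi> X = {set fs | fs. distinct fs \<and> set fs \<subseteq> fixedT n X \<and> chain_closure n \<Phi> X fs \<noteq> {}}"

definition coord_subspace :: "nat \<Rightarrow> nat set \<Rightarrow> 'k::field vec set set" where
  "coord_subspace n F = {ppt x | x. (\<exists>i. x i \<noteq> 0) \<and> supported n x \<and> (\<forall>i. i \<notin> F \<longrightarrow> x i = 0)}"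

definition SR_scheme :: "nat \<Rightarrow> nat set set \<Rightarrow> 'k::field vec set set" where
  "SR_scheme n \<Delta> = (\<Union>F\<in>\<Delta>. coord_subspace n F)"

definition coord_pt :: "nat \<Rightarrow> 'k::field vec set" where
  "coord_pt i = ppt (\<lambda>j. if j = i then 1 else 0)"

definition simplicial_complex :: "nat \<Rightarrow> nat set set \<Rightarrow> bool" where
  "simplicial_complex n \<Delta> \<longleftrightarrow> (\<forall>F\<in>\<Delta>. F \<subseteq> {1..n} \<and> (\<forall>G. G \<subseteq> F \<longrightarrow> G \<in> \<Delta>))"

end

theory Submission
  imports Defs
begin

(*
  A point of X(\<Delta>) lies in X(F) exactly when its support is a face, and over an infinite
  field the torus-fixed points are the coordinate points e_i.  If the B-B limit of p is e_y
  then y lies in the support of p; since "support together with S is a face" is a Zariski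
  closed condition (it is cut out by monomials), the closure of X_{e_y0,...,e_yk} stays among
  the points whose support together with {y0,...,yk} is a face, so every closure chain is a
  face.  Conversely, for a face y0 < ... < yk the points with support {yj,...,yk} flow to
  e_yj (the coordinate of smallest weight dominates), and their closure contains the points
  with support {y(j+1),...,yk}; hence the increasingly ordered face is a closure chain.
*)

section \<open>Polynomial curves over infinite fields\<close>

lemma infinite_UNIV_alg_closed_field: "infinite (UNIV :: 'k::alg_closed_field set)"
proof
  assume fin: "finite (UNIV :: 'k set)"
  define q :: "'k poly" where "q = (\<Prod>a\<in>UNIV. [:-a, 1:])"
  have "degree q = card (UNIV :: 'k set)"
    unfolding q_def by (subst degree_prod_eq_sum_degree) auto
  with fin have "degree (q + 1) > 0"
    by (simp add: finite_UNIV_card_ge_0 degree_add_eq_left)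
  then obtain x where "poly (q + 1) x = 0"
    using alg_closed_imp_poly_has_root by blast
  moreover have "poly q x = 0"
    unfolding q_def poly_prod using fin by (simp add: prod_zero_iff)
  ultimately show False by simp
qed

lemma poly_eq_0_if_vanishes_off_point:
  fixes q :: "'a::idom poly"
  assumes "infinite (UNIV :: 'a set)" and "\<And>z. z \<noteq> a \<Longrightarrow> poly q z = 0"
  shows "q = 0"
proof (rule ccontr)
  assume "q \<noteq> 0"
  then have "finite (insert a {z. poly q z = 0})" by (simp add: poly_roots_finite)
  moreover have "UNIV \<subseteq> insert a {z. poly q z = 0}" using assms(2) by auto
  ultimately show False using assms(1) finite_subset by blast
qed

definition poly_curve :: "('k::comm_semiring_0 \<Rightarrow> 'k vec) \<Rightarrow> bool" where
  "poly_curve w \<longleftrightarrow> (\<forall>i. \<exists>q. \<forall>z. w z i = poly q z)"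

lemma zhpoly_if_hpoly: "hpoly n d f \<Longrightarrow> zhpoly n d (\<lambda>z. f)"
proof (induction rule: hpoly.induct)
  case (hconst c)
  show ?case by (rule zconst)
next
  case (hvar i)
  then show ?case by (rule zvar)
next
  case (hadd d f g)
  then show ?case using zadd[of n d "\<lambda>z. f" "\<lambda>z. g"] by simp
next
  case (hmult d f e g)
  then show ?case using zmult[of n d "\<lambda>z. f" e "\<lambda>z. g"] by simp
qed

lemma zhpoly_homogeneous: "zhpoly n d f \<Longrightarrow> f z (scal c x) = c ^ d * f z x"
  by (induction rule: zhpoly.induct) (auto simp: scal_def power_add algebra_simps)

lemma zhpoly_comp_poly_curve:
  assumes "zhpoly n d f" and "poly_curve w"
  shows "\<exists>q. \<forall>z. f z (w z) = poly q z"
  using assms(1)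
proof induction
  case (zconst c)
  show ?case by (rule exI[of _ "[:c:]"]) simp
next
  case zzvar
  show ?case by (rule exI[of _ "[:0, 1:]"]) simp
next
  case (zvar i)
  show ?case using assms(2) by (simp add: poly_curve_def)
next
  case (zadd d f g)
  then obtain p q where "\<forall>z. f z (w z) = poly p z" "\<forall>z. g z (w z) = poly q z" by blast
  then show ?case by (intro exI[of _ "p + q"]) simp
next
  case (zmult d f e g)
  then obtain p q where "\<forall>z. f z (w z) = poly p z" "\<forall>z. g z (w z) = poly q z" by blast
  then show ?case by (intro exI[of _ "p * q"]) simp
qed

lemma zhpoly_poly_curve_vanishes_at_0:
  assumes "infinite (UNIV :: 'k::field set)" and "zhpoly n d f" and "poly_curve w"
    and "\<And>z::'k. z \<noteq> 0 \<Longrightarrow> f z (w z) = 0"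
  shows "f 0 (w 0) = 0"
proof -
  obtain q where q: "\<And>z. f z (w z) = poly q z"
    using zhpoly_comp_poly_curve[OF assms(2,3)] by blast
  have "q = 0"
    by (rule poly_eq_0_if_vanishes_off_point[OF assms(1), of 0]) (use assms(4) q in auto)
  then show ?thesis by (simp add: q)
qed

definition unit_vec :: "nat \<Rightarrow> 'k::zero_neq_one vec" where
  "unit_vec i = (\<lambda>j. if j = i then 1 else 0)"

definition psupp :: "'k::zero vec set \<Rightarrow> nat set" where
  "psupp p = {i. \<exists>v\<in>p. v i \<noteq> 0}"

lemma in_ppt_iff: "y \<in> ppt x \<longleftrightarrow> (\<exists>c. c \<noteq> 0 \<and> y = scal c x)"
  unfolding ppt_def by auto

lemma mem_ppt: "x \<in> ppt x"
  unfolding in_ppt_iff by (rule exI[of _ 1]) (simp add: scal_def)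

lemma zhpoly_vanishes_on_ppt: "zhpoly n d f \<Longrightarrow> f z x = 0 \<Longrightarrow> v \<in> ppt x \<Longrightarrow> f z v = 0"
  by (auto simp: in_ppt_iff zhpoly_homogeneous)

lemma scal_scal: "scal d (scal c x) = scal (d * c) (x :: 'k::semigroup_mult vec)"
  unfolding scal_def by (simp add: fun_eq_iff mult.assoc)

lemma ppt_scal:
  assumes "(c::'k::field) \<noteq> 0"
  shows "ppt (scal c x) = ppt x"
proof (intro set_eqI iffI)
  fix y assume "y \<in> ppt (scal c x)"
  then show "y \<in> ppt x" using assms unfolding in_ppt_iff scal_scal by (metis mult_eq_0_iff)
next
  fix y assume "y \<in> ppt x"
  then obtain d where "d \<noteq> 0" "y = scal (d / c * c) x" using assms by (auto simp: in_ppt_iff)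
  then show "y \<in> ppt (scal c x)" using assms unfolding in_ppt_iff scal_scal[symmetric]
    by (intro exI[of _ "d / c"]) simp
qed

lemma tact_ppt: "tact t (ppt x) = ppt (\<lambda>k. t k * x k)"
proof -
  have "tact t (ppt x) = {(\<lambda>i. t i * scal c x i) | c. c \<noteq> 0}"
    unfolding tact_def ppt_def by blast
  also have "\<dots> = ppt (\<lambda>k. t k * x k)"
    unfolding ppt_def by (simp add: scal_def mult.left_commute)
  finally show ?thesis .
qed

lemma Sact_ppt: "Sact \<Phi> z (ppt x) = ppt (\<lambda>k. z powi \<Phi> k * x k)"
  unfolding Sact_def tact_ppt ..

lemma psupp_ppt: "psupp (ppt (x::'k::field vec)) = {i. x i \<noteq> 0}"
  unfolding psupp_def using mem_ppt by (fastforce simp: in_ppt_iff scal_def)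

lemma ppt_in_proj_space: "x i \<noteq> 0 \<Longrightarrow> supported n x \<Longrightarrow> ppt x \<in> proj_space n"
  unfolding proj_space_def by blast

lemma proj_spaceE:
  assumes "p \<in> proj_space n"
  obtains x where "p = ppt x" "\<exists>i. x i \<noteq> 0" "supported n x"
  using assms unfolding proj_space_def by blast

lemma psupp_proj_space_subset: "p \<in> proj_space n \<Longrightarrow> psupp (p :: 'k::field vec set) \<subseteq> {1..n}"
  by (auto elim!: proj_spaceE simp: psupp_ppt supported_def)

lemma coord_pt_unit_vec: "coord_pt i = ppt (unit_vec i)"
  unfolding coord_pt_def unit_vec_def ..

lemma psupp_coord_pt [simp]: "psupp (coord_pt i :: 'k::field vec set) = {i}"
  unfolding coord_pt_unit_vec psupp_ppt by (auto simp: unit_vec_def)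

lemma inj_coord_pt: "inj (coord_pt :: nat \<Rightarrow> 'k::field vec set)"
  by (rule injI) (metis psupp_coord_pt singleton_inject)

lemma coord_pt_in_proj_space_iff:
  "coord_pt i \<in> (proj_space n :: 'k::field vec set set) \<longleftrightarrow> i \<in> {1..n}"
proof
  assume "coord_pt i \<in> (proj_space n :: 'k vec set set)"
  then show "i \<in> {1..n}" using psupp_proj_space_subset by fastforce
next
  assume "i \<in> {1..n}"
  then show "coord_pt i \<in> (proj_space n :: 'k vec set set)"
    unfolding coord_pt_unit_vec
    by (intro ppt_in_proj_space[of _ i]) (auto simp: unit_vec_def supported_def)
qed

lemma Sact_in_proj_space:
  assumes "p \<in> proj_space n" and "z \<noteq> 0"
  shows "Sact \<Phi> z p \<in> (proj_space n :: 'k::field vec set set)"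
proof -
  obtain x i where p: "p = ppt x" and x: "x i \<noteq> 0" "supported n x"
    using assms(1) by (elim proj_spaceE) blast
  then show ?thesis
    unfolding p Sact_ppt using assms(2) by (intro ppt_in_proj_space[of _ i]) (auto simp: supported_def)
qed

lemma psupp_Sact:
  assumes "p \<in> proj_space n" and "z \<noteq> 0"
  shows "psupp (Sact \<Phi> z p) = psupp (p :: 'k::field vec set)"
  using assms(1) by (elim proj_spaceE) (simp add: Sact_ppt psupp_ppt assms(2))

section \<open>Zariski closed sets\<close>

lemma subset_zclosure: "A \<subseteq> zclosure n A"
  unfolding zclosure_def by blast

lemma zclosure_mono: "A \<subseteq> B \<Longrightarrow> zclosure n A \<subseteq> zclosure n B"
  unfolding zclosure_def by blast

lemma zclosure_subset_zclosed: "zclosed n C \<Longrightarrow> A \<subseteq> C \<Longrightarrow> zclosure n A \<subseteq> C"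
  unfolding zclosure_def by blast

lemma hpoly_prod_coords:
  assumes "M \<subseteq> {1..n}"
  shows "hpoly n (card M) (\<lambda>x::'k::field vec. \<Prod>i\<in>M. x i)"
  using finite_subset[OF assms finite_atLeastAtMost] assms
proof (induction M rule: finite_induct)
  case empty
  then show ?case using hconst[of n 1] by simp
next
  case (insert i M)
  then show ?case using hmult[OF hvar, of i n "card M"] by simp
qed

lemma prod_coords_vanish_on_ppt_iff:
  "finite M \<Longrightarrow> (\<forall>v\<in>ppt x. (\<Prod>i\<in>M. v i) = 0) \<longleftrightarrow> \<not> M \<subseteq> psupp (ppt (x::'k::field vec))"
  using mem_ppt[of x] by (fastforce simp: psupp_ppt in_ppt_iff scal_def)

text \<open>Since \<open>U\<close> is a downset, a support lies in \<open>U\<close> iff it contains no \<open>M \<notin> U\<close>, i.e. iff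
  all monomials \<open>\<Prod>i\<in>M. x i\<close> with \<open>M \<notin> U\<close> vanish.\<close>
lemma zclosed_psupp_downset:
  assumes down: "\<And>s s'. s \<subseteq> s' \<Longrightarrow> s' \<in> U \<Longrightarrow> s \<in> U"
  shows "zclosed n {p \<in> proj_space n :: 'k::field vec set set. psupp p \<in> U}"
  unfolding zclosed_def
proof (intro exI conjI)
  let ?F = "(\<lambda>M (x::'k vec). \<Prod>i\<in>M. x i) ` {M. M \<subseteq> {1..n} \<and> M \<notin> U}"
  show "\<forall>f\<in>?F. \<exists>d. hpoly n d f" using hpoly_prod_coords by auto
  show "{p \<in> proj_space n. psupp p \<in> U} = {p \<in> proj_space n. \<forall>f\<in>?F. \<forall>x\<in>p. f x = 0}"
  proof (intro Collect_cong conj_cong refl)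
    fix p :: "'k vec set"
    assume p: "p \<in> proj_space n"
    then obtain x where x: "p = ppt x" by (rule proj_spaceE)
    have "psupp p \<in> U \<longleftrightarrow> (\<forall>M. M \<subseteq> {1..n} \<longrightarrow> M \<notin> U \<longrightarrow> \<not> M \<subseteq> psupp p)"
    proof
      assume "psupp p \<in> U"
      then show "\<forall>M. M \<subseteq> {1..n} \<longrightarrow> M \<notin> U \<longrightarrow> \<not> M \<subseteq> psupp p" using down by blast
    qed (use psupp_proj_space_subset[OF p] in blast)
    also have "\<dots> \<longleftrightarrow> (\<forall>M. M \<subseteq> {1..n} \<longrightarrow> M \<notin> U \<longrightarrow> (\<forall>v\<in>p. (\<Prod>i\<in>M. v i) = 0))"
    proof -
      have "(\<forall>v\<in>p. (\<Prod>i\<in>M. v i) = 0) \<longleftrightarrow> \<not> M \<subseteq> psupp p" if "M \<subseteq> {1..n}" for M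
        unfolding x using finite_subset[OF that finite_atLeastAtMost]
        by (rule prod_coords_vanish_on_ppt_iff)
      then show ?thesis by simp
    qed
    also have "\<dots> \<longleftrightarrow> (\<forall>f\<in>?F. \<forall>v\<in>p. f v = 0)"
      by auto
    finally show "psupp p \<in> U \<longleftrightarrow> (\<forall>f\<in>?F. \<forall>v\<in>p. f v = 0)" .
  qed
qed

lemma zclosure_poly_curve_limit:
  assumes "infinite (UNIV :: 'k::field set)" and "poly_curve w"
    and "\<And>t::'k. t \<noteq> 0 \<Longrightarrow> ppt (w t) \<in> A" and "ppt (w 0) \<in> proj_space n"
  shows "ppt (w 0) \<in> zclosure n A"
  unfolding zclosure_def
proof (intro InterI, clarify)
  fix D assume "zclosed n D" "A \<subseteq> D"
  then obtain F where F: "\<forall>f\<in>F. \<exists>d. hpoly n d f"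
    and D: "D = {p \<in> proj_space n. \<forall>f\<in>F. \<forall>x\<in>p. f x = 0}"
    unfolding zclosed_def by blast
  have "\<forall>v\<in>ppt (w 0). f v = 0" if "f \<in> F" for f
  proof -
    obtain d where d: "zhpoly n d (\<lambda>z. f)" using F \<open>f \<in> F\<close> zhpoly_if_hpoly by blast
    have "f (w t) = 0" if "t \<noteq> 0" for t
    proof -
      have "ppt (w t) \<in> D" using assms(3)[OF that] \<open>A \<subseteq> D\<close> by blast
      then show ?thesis using \<open>f \<in> F\<close> mem_ppt[of "w t"] unfolding D by blast
    qed
    then have "f (w 0) = 0"
      using zhpoly_poly_curve_vanishes_at_0[OF assms(1) d assms(2)] by blast
    then show ?thesis using zhpoly_vanishes_on_ppt[OF d] by blast
  qed
  then show "ppt (w 0) \<in> D" unfolding D using assms(4) by blast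
qed

lemma zclosure2_poly_curve_limit:
  assumes "infinite (UNIV :: 'k::field set)" and "poly_curve w"
    and "\<And>z::'k. z \<noteq> 0 \<Longrightarrow> (z, ppt (w z)) \<in> A" and "ppt (w 0) \<in> proj_space n"
  shows "(0, ppt (w 0)) \<in> zclosure2 n A"
  unfolding zclosure2_def
proof (intro InterI, clarify)
  fix C assume "zclosed2 n C" "A \<subseteq> C"
  then obtain F where F: "\<forall>f\<in>F. \<exists>d. zhpoly n d f"
    and C: "C = {(z, p) | z p. p \<in> proj_space n \<and> (\<forall>f\<in>F. \<forall>x\<in>p. f z x = 0)}"
    unfolding zclosed2_def by blast
  have "\<forall>v\<in>ppt (w 0). f 0 v = 0" if "f \<in> F" for f
  proof -
    obtain d where d: "zhpoly n d f" using F \<open>f \<in> F\<close> by blast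
    have "f z (w z) = 0" if "z \<noteq> 0" for z
    proof -
      have "(z, ppt (w z)) \<in> C" using assms(3)[OF that] \<open>A \<subseteq> C\<close> by blast
      then show ?thesis using \<open>f \<in> F\<close> mem_ppt[of "w z"] unfolding C by blast
    qed
    then have "f 0 (w 0) = 0"
      using zhpoly_poly_curve_vanishes_at_0[OF assms(1) d assms(2)] by blast
    then show ?thesis using zhpoly_vanishes_on_ppt[OF d] by blast
  qed
  then show "(0, ppt (w 0)) \<in> C" unfolding C using assms(4) by blast
qed

section \<open>Limits of the one-parameter subgroup\<close>

lemma bb_lim_coord_pt_imp_in_psupp:
  assumes "p \<in> proj_space n" and "bb_lim n \<Phi> p (coord_pt y :: 'k::field vec set)"
  shows "y \<in> psupp p"
proof (rule ccontr)
  assume "y \<notin> psupp p"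
  have y: "y \<in> {1..n}"
    using assms(2) coord_pt_in_proj_space_iff unfolding bb_lim_def by blast
  define D :: "('k \<times> 'k vec set) set"
    where "D = {(z, q) | z q. q \<in> proj_space n \<and> y \<notin> psupp q}"
  have "zclosed2 n D"
    unfolding zclosed2_def D_def psupp_def
    by (rule exI[of _ "{\<lambda>z v. v y}"]) (auto intro: zvar[OF y])
  moreover have "{(z, Sact \<Phi> z p) | z. z \<noteq> 0} \<subseteq> D"
    unfolding D_def using assms(1) \<open>y \<notin> psupp p\<close> by (auto simp: Sact_in_proj_space psupp_Sact)
  ultimately have "(0, coord_pt y) \<in> D"
    using assms(2) unfolding bb_lim_def zclosure2_def by blast
  then show False unfolding D_def by simp
qed

text \<open>As \<open>z \<rightarrow> 0\<close>, the coordinate with the smallest weight \<open>\<Phi>\<close> dominates \<open>S(z) \<cdot> p\<close>;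
  rescaling by \<open>z powi - \<Phi> y\<close> turns the orbit into a polynomial curve through \<open>coord_pt y\<close>.\<close>
lemma bb_lim_coord_pt_Min:
  assumes "infinite (UNIV :: 'k::field set)" and mono: "strict_mono_on {1..n} \<Phi>"
    and "p \<in> proj_space n" and "y \<in> psupp p" and least: "\<And>i. i \<in> psupp p \<Longrightarrow> y \<le> i"
  shows "bb_lim n \<Phi> p (coord_pt y :: 'k vec set)"
proof -
  obtain x where p: "p = ppt x" using assms(3) by (rule proj_spaceE)
  have supp: "x i \<noteq> 0 \<longleftrightarrow> i \<in> psupp p" for i
    by (simp add: p psupp_ppt)
  have less: "\<Phi> y < \<Phi> i" if "x i \<noteq> 0" "i \<noteq> y" for i
    using that supp least[of i] psupp_proj_space_subset[OF assms(3)] assms(4)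
    by (intro strict_mono_onD[OF mono]) auto
  define w where "w z i = z ^ nat (\<Phi> i - \<Phi> y) * x i" for z :: 'k and i
  have curve: "poly_curve w"
    unfolding poly_curve_def w_def
    by (intro allI exI[of _ "monom (x _) (nat (\<Phi> _ - \<Phi> y))"]) (simp add: poly_monom mult.commute)
  have orbit: "(z, ppt (w z)) \<in> {(z, Sact \<Phi> z p) | z. z \<noteq> 0}" if "z \<noteq> 0" for z
  proof -
    have "z ^ nat (\<Phi> i - \<Phi> y) = z powi (- \<Phi> y) * z powi \<Phi> i" if "x i \<noteq> 0" for i
    proof -
      have "z powi (- \<Phi> y) * z powi \<Phi> i = z powi (\<Phi> i - \<Phi> y)"
        using \<open>z \<noteq> 0\<close> by (simp add: power_int_add[symmetric])
      also have "\<dots> = z ^ nat (\<Phi> i - \<Phi> y)"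
        using less[OF that] by (cases "i = y") (simp_all add: power_int_def)
      finally show ?thesis ..
    qed
    then have "w z = scal (z powi (- \<Phi> y)) (\<lambda>k. z powi \<Phi> k * x k)"
      by (auto simp: w_def scal_def fun_eq_iff mult.assoc)
    then have "ppt (w z) = Sact \<Phi> z p"
      using \<open>z \<noteq> 0\<close> by (simp add: ppt_scal p Sact_ppt)
    then show ?thesis using \<open>z \<noteq> 0\<close> by blast
  qed
  have w0: "ppt (w 0) = coord_pt y"
  proof -
    have "w 0 = scal (x y) (unit_vec y)"
      using less by (auto simp: w_def scal_def unit_vec_def fun_eq_iff)
    then show ?thesis using supp assms(4) by (simp add: ppt_scal coord_pt_unit_vec)
  qed
  have "coord_pt y \<in> (proj_space n :: 'k vec set set)"
    using psupp_proj_space_subset[OF assms(3)] assms(4) coord_pt_in_proj_space_iff by blast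
  with zclosure2_poly_curve_limit[OF assms(1) curve orbit] show ?thesis
    unfolding bb_lim_def w0 by blast
qed

section \<open>Torus-fixed points of the Stanley--Reisner scheme\<close>

lemma tact_coord_pt: "t \<in> torus n \<Longrightarrow> tact t (coord_pt i) = (coord_pt i :: 'k::field vec set)"
proof -
  assume "t \<in> torus n"
  then have "(\<lambda>k. t k * unit_vec i k) = scal (t i) (unit_vec i :: 'k vec)" "t i \<noteq> 0"
    by (auto simp: scal_def unit_vec_def torus_def)
  then show ?thesis unfolding coord_pt_unit_vec tact_ppt by (simp add: ppt_scal)
qed

text \<open>Over an infinite field a torus element scaling one coordinate by some \<open>a \<notin> {0, 1}\<close>
  separates any point with two nonzero coordinates from itself.\<close>
lemma torus_fixed_imp_coord_pt:
  assumes "infinite (UNIV :: 'k::field set)" and "p \<in> proj_space n"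
    and fixed: "\<And>t. t \<in> torus n \<Longrightarrow> tact t p = p"
  obtains i where "p = (coord_pt i :: 'k vec set)"
proof -
  obtain x i where p: "p = ppt x" and xi: "x i \<noteq> 0"
    using assms(2) by (elim proj_spaceE) blast
  have "x j = 0" if "j \<noteq> i" for j
  proof (rule ccontr)
    assume xj: "x j \<noteq> 0"
    obtain a :: 'k where a: "a \<notin> {0, 1}"
      using ex_new_if_finite[OF assms(1), of "{0, 1}"] by blast
    define t where "t = (\<lambda>k. if k = j then a else 1)"
    have "t \<in> torus n" using a by (simp add: t_def torus_def)
    then have "ppt (\<lambda>k. t k * x k) = ppt x" using fixed unfolding p tact_ppt by blast
    then obtain c where c: "(\<lambda>k. t k * x k) = scal c x" using mem_ppt in_ppt_iff by metis
    have "c = 1" using fun_cong[OF c, of i] xi \<open>j \<noteq> i\<close> by (simp add: t_def scal_def)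
    moreover have "a = c" using fun_cong[OF c, of j] xj by (simp add: t_def scal_def)
    ultimately show False using a by simp
  qed
  then have "x = scal (x i) (unit_vec i)" by (auto simp: scal_def unit_vec_def)
  then have "p = coord_pt i" using xi p ppt_scal coord_pt_unit_vec by metis
  then show ?thesis by (rule that)
qed

lemma simplicial_complex_subset:
  "simplicial_complex n \<Delta> \<Longrightarrow> F \<in> \<Delta> \<Longrightarrow> G \<subseteq> F \<Longrightarrow> G \<in> \<Delta>"
  unfolding simplicial_complex_def by blast

lemma SR_scheme_iff:
  assumes "simplicial_complex n \<Delta>"
  shows "p \<in> SR_scheme n \<Delta> \<longleftrightarrow> p \<in> proj_space n \<and> psupp p \<in> \<Delta>"
proof
  assume "p \<in> SR_scheme n \<Delta>"
  then obtain F x where "F \<in> \<Delta>" and x: "p = ppt x" "\<exists>i. x i \<noteq> 0" "supported n x"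
      "\<forall>i. i \<notin> F \<longrightarrow> x i = 0"
    unfolding SR_scheme_def coord_subspace_def by blast
  moreover have "psupp p \<subseteq> F" using x(1,4) psupp_ppt by fastforce
  ultimately show "p \<in> proj_space n \<and> psupp p \<in> \<Delta>"
    using simplicial_complex_subset[OF assms] unfolding proj_space_def by blast
next
  assume p: "p \<in> proj_space n \<and> psupp p \<in> \<Delta>"
  then obtain x where x: "p = ppt x" "\<exists>i. x i \<noteq> 0" "supported n x"
    by (elim conjE proj_spaceE)
  then have "p \<in> coord_subspace n (psupp p)"
    unfolding coord_subspace_def by (auto simp: psupp_ppt)
  with p show "p \<in> SR_scheme n \<Delta>" unfolding SR_scheme_def by blast
qed

lemma fixedT_SR_scheme:
  assumes "infinite (UNIV :: 'k::field set)" and sc: "simplicial_complex n \<Delta>"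
  shows "fixedT n (SR_scheme n \<Delta> :: 'k vec set set) = coord_pt ` \<Union>\<Delta>"
proof (intro equalityI subsetI)
  fix p :: "'k vec set"
  assume "p \<in> fixedT n (SR_scheme n \<Delta>)"
  then have "p \<in> proj_space n" "psupp p \<in> \<Delta>" "\<And>t. t \<in> torus n \<Longrightarrow> tact t p = p"
    unfolding fixedT_def SR_scheme_iff[OF sc] by auto
  moreover from torus_fixed_imp_coord_pt[OF assms(1) this(1,3)]
  obtain i where "p = coord_pt i" .
  ultimately show "p \<in> coord_pt ` \<Union>\<Delta>" by auto
next
  fix p :: "'k vec set"
  assume "p \<in> coord_pt ` \<Union>\<Delta>"
  then obtain i F where p: "p = coord_pt i" and "i \<in> F" "F \<in> \<Delta>" by blast
  then have "{i} \<in> \<Delta>" "i \<in> {1..n}" using sc unfolding simplicial_complex_def by blast+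
  then show "p \<in> fixedT n (SR_scheme n \<Delta>)"
    unfolding fixedT_def SR_scheme_iff[OF sc] p
    by (simp add: coord_pt_in_proj_space_iff tact_coord_pt)
qed

section \<open>Closure chains of the Stanley--Reisner scheme\<close>

definition supp_cell :: "nat \<Rightarrow> nat set \<Rightarrow> 'k::field vec set set" where
  "supp_cell n S = {p \<in> proj_space n. psupp p = S}"

definition closed_star :: "nat \<Rightarrow> nat set set \<Rightarrow> nat set \<Rightarrow> 'k::field vec set set" where
  "closed_star n \<Delta> S = {p \<in> proj_space n. psupp p \<union> S \<in> \<Delta>}"

definition chain_fold ::
    "nat \<Rightarrow> (nat \<Rightarrow> int) \<Rightarrow> 'k::field vec set set \<Rightarrow> 'k vec set set \<Rightarrow> 'k vec set list \<Rightarrow> 'k vec set set" where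
  "chain_fold n \<Phi> X C fs = foldl (\<lambda>C f. zclosure n (C \<inter> bb_stratum n \<Phi> X f)) C fs"

lemma chain_fold_simps [simp]:
  "chain_fold n \<Phi> X C [] = C"
  "chain_fold n \<Phi> X C (f # fs) = chain_fold n \<Phi> X (zclosure n (C \<inter> bb_stratum n \<Phi> X f)) fs"
  unfolding chain_fold_def by simp_all

lemma chain_closure_eq_chain_fold: "chain_closure n \<Phi> X fs = chain_fold n \<Phi> X X fs"
  unfolding chain_closure_def chain_fold_def ..

lemma coord_pt_in_supp_cell: "i \<in> {1..n} \<Longrightarrow> coord_pt i \<in> supp_cell n {i}"
  unfolding supp_cell_def by (simp add: coord_pt_in_proj_space_iff)

lemma supp_cell_subset_SR_scheme:
  "simplicial_complex n \<Delta> \<Longrightarrow> S \<in> \<Delta> \<Longrightarrow> supp_cell n S \<subseteq> SR_scheme n \<Delta>"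
  unfolding supp_cell_def by (auto simp: SR_scheme_iff)

text \<open>The line \<open>t \<mapsto> x + t e\<^sub>y\<close> stays in the cell of \<open>S \<union> {y}\<close> for \<open>t \<noteq> 0\<close>
  and reaches \<open>x\<close> at \<open>t = 0\<close>.\<close>
lemma supp_cell_subset_zclosure_insert:
  assumes "infinite (UNIV :: 'k::field set)" and "y \<in> {1..n}" and "y \<notin> S"
  shows "supp_cell n S \<subseteq> zclosure n (supp_cell n (insert y S) :: 'k vec set set)"
proof
  fix q :: "'k vec set"
  assume q: "q \<in> supp_cell n S"
  then obtain x where x: "q = ppt x" "supported n x"
    unfolding supp_cell_def by (auto elim: proj_spaceE)
  have supp_x: "{i. x i \<noteq> 0} = S" using q by (simp add: supp_cell_def x(1) psupp_ppt)
  define w where "w t i = x i + t * unit_vec y i" for t :: 'k and i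
  have curve: "poly_curve w"
    unfolding poly_curve_def w_def by (intro allI exI[of _ "[:x _, unit_vec y _:]"]) simp
  have line: "ppt (w t) \<in> supp_cell n (insert y S)" if "t \<noteq> 0" for t
  proof -
    have "supported n (w t)" using x(2) assms(2) by (auto simp: w_def unit_vec_def supported_def)
    moreover have supp_w: "{i. w t i \<noteq> 0} = insert y S"
      using supp_x assms(3) \<open>t \<noteq> 0\<close> by (auto simp: w_def unit_vec_def)
    moreover have "w t y \<noteq> 0" using supp_w by blast
    ultimately show ?thesis
      by (simp add: supp_cell_def psupp_ppt ppt_in_proj_space)
  qed
  have "w 0 = x" by (simp add: w_def fun_eq_iff)
  moreover have "q \<in> proj_space n" using q by (simp add: supp_cell_def)
  ultimately show "q \<in> zclosure n (supp_cell n (insert y S))"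
    using zclosure_poly_curve_limit[OF assms(1) curve line] x(1) by simp
qed

lemma zclosed_closed_star:
  assumes "simplicial_complex n \<Delta>"
  shows "zclosed n (closed_star n \<Delta> S :: 'k::field vec set set)"
proof -
  have "zclosed n {p \<in> proj_space n :: 'k vec set set. psupp p \<in> {s. s \<union> S \<in> \<Delta>}}"
    by (rule zclosed_psupp_downset)
      (use simplicial_complex_subset[OF assms] in blast)
  then show ?thesis unfolding closed_star_def by simp
qed

lemma chain_fold_subset_closed_star:
  assumes sc: "simplicial_complex n \<Delta>" and "C \<subseteq> closed_star n \<Delta> S"
  shows "chain_fold n \<Phi> X C (map coord_pt ys) \<subseteq> closed_star n \<Delta> (S \<union> set ys)"
  using assms(2)
proof (induction ys arbitrary: C S)
  case Nil
  then show ?case by simp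
next
  case (Cons y ys)
  have "C \<inter> bb_stratum n \<Phi> X (coord_pt y) \<subseteq> closed_star n \<Delta> (insert y S)"
  proof
    fix p assume p: "p \<in> C \<inter> bb_stratum n \<Phi> X (coord_pt y)"
    then have star: "p \<in> closed_star n \<Delta> S" using Cons.prems by blast
    then have "y \<in> psupp p"
      using p bb_lim_coord_pt_imp_in_psupp unfolding bb_stratum_def closed_star_def by blast
    then have "psupp p \<union> insert y S = psupp p \<union> S" by blast
    with star show "p \<in> closed_star n \<Delta> (insert y S)" unfolding closed_star_def by simp
  qed
  then have "zclosure n (C \<inter> bb_stratum n \<Phi> X (coord_pt y)) \<subseteq> closed_star n \<Delta> (insert y S)"
    by (rule zclosure_subset_zclosed[OF zclosed_closed_star[OF sc]])
  from Cons.IH[OF this] show ?case by simp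
qed

lemma chain_fold_sorted_face_nonempty:
  assumes inf: "infinite (UNIV :: 'k::field set)" and sc: "simplicial_complex n \<Delta>"
    and mono: "strict_mono_on {1..n} \<Phi>"
  shows "sorted_wrt (<) ys \<Longrightarrow> set ys \<in> \<Delta> \<Longrightarrow> ys \<noteq> [] \<Longrightarrow> supp_cell n (set ys) \<subseteq> C \<Longrightarrow>
    chain_fold n \<Phi> (SR_scheme n \<Delta>) C (map coord_pt ys) \<noteq> ({} :: 'k vec set set)"
proof (induction ys arbitrary: C)
  case Nil
  then show ?case by simp
next
  case (Cons y ys)
  define A where "A = C \<inter> bb_stratum n \<Phi> (SR_scheme n \<Delta>) (coord_pt y)"
  have y: "y \<in> {1..n}" "y \<notin> set ys"
    using sc Cons.prems(1,2) unfolding simplicial_complex_def by auto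
  have cell_A: "supp_cell n (set (y # ys)) \<subseteq> A"
  proof
    fix p :: "'k vec set"
    assume p: "p \<in> supp_cell n (set (y # ys))"
    have "bb_lim n \<Phi> p (coord_pt y)"
      using p Cons.prems(1) unfolding supp_cell_def
      by (intro bb_lim_coord_pt_Min[OF inf mono]) auto
    then show "p \<in> A"
      using p Cons.prems(2,4) supp_cell_subset_SR_scheme[OF sc]
      unfolding A_def bb_stratum_def by blast
  qed
  show ?case
  proof (cases "ys = []")
    case True
    then have "coord_pt y \<in> zclosure n A"
      using cell_A subset_zclosure coord_pt_in_supp_cell[OF y(1)] by fastforce
    then show ?thesis using True by (auto simp: A_def)
  next
    case False
    have "supp_cell n (set ys) \<subseteq> zclosure n A"
      using supp_cell_subset_zclosure_insert[OF inf y] zclosure_mono[OF cell_A] by auto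
    moreover have "set ys \<in> \<Delta>"
      using simplicial_complex_subset[OF sc Cons.prems(2)] by (meson set_subset_Cons)
    ultimately show ?thesis using Cons.IH Cons.prems(1) False by (simp add: A_def)
  qed
qed

lemma closure_chains_SR_scheme_subset:
  assumes "infinite (UNIV :: 'k::field set)" and sc: "simplicial_complex n \<Delta>"
  shows "closure_chains n \<Phi> (SR_scheme n \<Delta> :: 'k vec set set) \<subseteq> (\<lambda>F. coord_pt ` F) ` \<Delta>"
proof
  fix A assume "A \<in> closure_chains n \<Phi> (SR_scheme n \<Delta> :: 'k vec set set)"
  then obtain fs where A: "A = set fs" and fixed: "set fs \<subseteq> fixedT n (SR_scheme n \<Delta>)"
    and ne: "chain_closure n \<Phi> (SR_scheme n \<Delta>) fs \<noteq> {}"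
    unfolding closure_chains_def by blast
  have "\<forall>f\<in>set fs. \<exists>i. f = coord_pt i"
    using fixed unfolding fixedT_SR_scheme[OF assms] by blast
  then obtain ys where fs: "fs = map coord_pt ys" unfolding ex_map_conv[symmetric] by blast
  have "SR_scheme n \<Delta> \<subseteq> (closed_star n \<Delta> {} :: 'k vec set set)"
    unfolding closed_star_def by (auto simp: SR_scheme_iff[OF sc])
  from chain_fold_subset_closed_star[OF sc this, of \<Phi> "SR_scheme n \<Delta>" ys] ne
  obtain p :: "'k vec set" where "psupp p \<union> set ys \<in> \<Delta>"
    unfolding chain_closure_eq_chain_fold fs closed_star_def Un_empty_left by blast
  then have "set ys \<in> \<Delta>" by (rule simplicial_complex_subset[OF sc]) blast
  then show "A \<in> (\<lambda>F. coord_pt ` F) ` \<Delta>" unfolding A fs by simp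
qed

lemma face_in_closure_chains_SR_scheme:
  assumes inf: "infinite (UNIV :: 'k::field set)" and sc: "simplicial_complex n \<Delta>"
    and mono: "strict_mono_on {1..n} \<Phi>" and X_ne: "SR_scheme n \<Delta> \<noteq> ({} :: 'k vec set set)"
    and F: "F \<in> \<Delta>"
  shows "coord_pt ` F \<in> closure_chains n \<Phi> (SR_scheme n \<Delta> :: 'k vec set set)"
proof -
  define ys where "ys = sorted_list_of_set F"
  define fs :: "'k vec set list" where "fs = map coord_pt ys"
  have "F \<subseteq> {1..n}" using sc F unfolding simplicial_complex_def by blast
  then have "finite F" by (rule finite_subset) simp
  then have ys: "set ys = F" "sorted_wrt (<) ys" "distinct ys" by (simp_all add: ys_def)
  have "chain_closure n \<Phi> (SR_scheme n \<Delta>) fs \<noteq> {}"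
  proof (cases "ys = []")
    case True
    then show ?thesis using X_ne by (simp add: fs_def chain_closure_eq_chain_fold)
  next
    case False
    have "supp_cell n (set ys) \<subseteq> (SR_scheme n \<Delta> :: 'k vec set set)"
      using supp_cell_subset_SR_scheme[OF sc] F ys(1) by blast
    with chain_fold_sorted_face_nonempty[OF inf sc mono ys(2)] F ys(1) False
    show ?thesis by (simp add: fs_def chain_closure_eq_chain_fold)
  qed
  moreover have "distinct fs"
    unfolding fs_def distinct_map using ys(3) inj_on_subset[OF inj_coord_pt subset_UNIV] by blast
  moreover have "set fs \<subseteq> fixedT n (SR_scheme n \<Delta>)"
    using F ys(1) by (auto simp: fs_def fixedT_SR_scheme[OF inf sc])
  moreover have "set fs = coord_pt ` F" using ys(1) by (simp add: fs_def)
  ultimately show ?thesis unfolding closure_chains_def by (intro CollectI exI[of _ fs]) simp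
qed

theorem proposition1p1:
  fixes n :: nat and \<Delta> :: "nat set set" and \<Phi> :: "nat \<Rightarrow> int"
  assumes "simplicial_complex n \<Delta>"
    and "\<exists>F\<in>\<Delta>. F \<noteq> {}"
    and "strict_mono_on {1..n} \<Phi>"
  shows "closure_chains n \<Phi> (SR_scheme n \<Delta> :: 'k::alg_closed_field vec set set)
           = (\<lambda>F. coord_pt ` F) ` \<Delta>"
proof -
  have inf: "infinite (UNIV :: 'k set)" by (rule infinite_UNIV_alg_closed_field)
  have "fixedT n (SR_scheme n \<Delta> :: 'k vec set set) \<noteq> {}"
    using assms(2) unfolding fixedT_SR_scheme[OF inf assms(1)] by auto
  then have "SR_scheme n \<Delta> \<noteq> ({} :: 'k vec set set)" unfolding fixedT_def by blast
  then show ?thesis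
    using closure_chains_SR_scheme_subset[OF inf assms(1)]
      face_in_closure_chains_SR_scheme[OF inf assms(1,3)] by (intro equalityI) auto
qed

end
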